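(* Let $A\subseteq\mathbb{R}^2$ be a Lebesgue measurable set with $d^*(A)>0$, and let $\alpha>0$. Then there exist points $x,y,z\in A$ which form the vertices of a triangle of area $\alpha$.
   Context: $m$ is Lebesgue measure on $\mathbb{R}^2$ and $Q(x,t)$ is the closed axis-parallel square with centre $x$ and side length $t$. The upper Banach density is $d^*(A):=\limsup_{t\to\infty}\sup_{x\in\mathbb{R}^2}\frac{m(A\cap Q(x,t))}{m(Q(x,t))}$. *)

theory Defs
  imports "HOL-Analysis.Analysis"
begin

definition square :: "real^2 \<Rightarrow> real \<Rightarrow> (real^2) set" where
  "square x t = cbox (x - (t/2) *\<^sub>R One) (x + (t/2) *\<^sub>R One)"

definition upper_banach_density :: "(real^2) set \<Rightarrow> ereal" where
  "upper_banach_density A =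
     Limsup at_top (\<lambda>t::real. SUP x. ereal (measure lebesgue (A \<inter> square x t) / measure lebesgue (square x t)))"

definition triangle_area :: "real^2 \<Rightarrow> real^2 \<Rightarrow> real^2 \<Rightarrow> real" where
  "triangle_area x y z =
     \<bar>(y$1 - x$1) * (z$2 - x$2) - (y$2 - x$2) * (z$1 - x$1)\<bar> / 2"

end

(*
  Up to a null set, A contains a Borel set B such that for some d > 0 there are squares
  Q(y, t) of arbitrarily large side t with m(B \<inter> Q(y, t)) > d t^2. Fix a piece E of B of
  positive measure \<mu> inside one such square. By the regularity of Lebesgue measure there is
  \<delta> > 0 such that, for |u| < \<delta>, every subset of E of measure > \<mu>d/16 meets E - u.
  Double counting the pairs (x, v) with x \<in> E and x + v \<in> B \<inter> Q(y, t) over a very large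
  dense square yields, for every R, a vector v with |v| \<ge> R such that {x \<in> E. x + v \<in> B}
  has measure > \<mu>d/8. Choosing u \<perp> v with |u| = 2\<alpha>/|v| < \<delta> then produces x with x,
  x + u, x + v \<in> B, the vertices of a triangle of area |u||v|/2 = \<alpha>.
*)

theory Submission
  imports Defs
begin

lemma One_vec_nth [simp]: "(One :: real^'n) $ i = 1"
  using inner_sum_Basis[of "axis i (1::real)"]
  by (simp add: cart_eq_inner_axis del: inner_sum_Basis)

lemma mem_square_iff: "x \<in> square y t \<longleftrightarrow> (\<forall>i. y $ i - t / 2 \<le> x $ i \<and> x $ i \<le> y $ i + t / 2)"
  unfolding square_def by (simp add: mem_box_cart del: sum_component)

lemma square_eq_empty: "t < 0 \<Longrightarrow> square y t = {}"
  by (force simp: mem_square_iff dest: spec[of _ 1])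

lemma bounded_square [simp]: "bounded (square y t)"
  by (simp add: square_def)

lemma square_in_borel [measurable]: "square y t \<in> sets borel"
  by (simp add: square_def)

lemma lmeasurable_Int_square:
  assumes "A \<in> sets lebesgue"
  shows "A \<inter> square y t \<in> lmeasurable"
  using assms by (intro bounded_set_imp_lmeasurable) (auto simp: bounded_Int)

lemma emeasure_Int_square:
  assumes "A \<in> sets lebesgue"
  shows "emeasure lebesgue (A \<inter> square y t) = ennreal (measure lebesgue (A \<inter> square y t))"
  using lmeasurable_Int_square[OF assms] by (rule emeasure_eq_measure2)

lemma measure_lborel_square:
  assumes "t \<ge> 0"
  shows "measure lborel (square y t) = t^2"
proof -
  have "y \<in> square y t"
    using assms by (simp add: mem_square_iff)
  then have "square y t \<noteq> {}"
    by blast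
  then show ?thesis
    unfolding square_def by (simp add: content_cbox_cart UNIV_2 power2_eq_square del: sum_component)
qed

lemma emeasure_square:
  assumes "t \<ge> 0"
  shows "emeasure lborel (square y t) = ennreal (t^2)"
proof -
  have "emeasure lborel (square y t) \<noteq> \<infinity>"
    using emeasure_lborel_cbox_finite unfolding square_def by (simp add: less_top)
  then show ?thesis
    using measure_lborel_square[OF assms] by (simp add: emeasure_eq_ennreal_measure)
qed

lemma measure_square:
  assumes "t \<ge> 0"
  shows "measure lebesgue (square y t) = t^2"
  using measure_lborel_square[OF assms] by (simp add: square_def measure_completion)

lemma diff_mem_square:
  assumes "x \<in> square y0 t0" "z \<in> square y t"
  shows "z - x \<in> square (y - y0) (t + t0)"
  unfolding mem_square_iff
proof
  fix i
  have "y0 $ i - t0 / 2 \<le> x $ i" "x $ i \<le> y0 $ i + t0 / 2" "y $ i - t / 2 \<le> z $ i" "z $ i \<le> y $ i + t / 2"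
    using assms by (auto simp: mem_square_iff)
  then show "(y - y0) $ i - (t + t0) / 2 \<le> (z - x) $ i \<and> (z - x) $ i \<le> (y - y0) $ i + (t + t0) / 2"
    by (simp add: field_simps)
qed

lemma norm_less_imp_mem_square:
  assumes "norm v < r"
  shows "v \<in> square 0 (2 * r)"
  unfolding mem_square_iff
proof
  fix i
  show "(0::real^2) $ i - 2 * r / 2 \<le> v $ i \<and> v $ i \<le> 0 $ i + 2 * r / 2"
    using component_le_norm_cart[of v i] assms by (simp add: abs_le_iff)
qed

definition has_large_dense_squares :: "real \<Rightarrow> (real^2) set \<Rightarrow> bool" where
  "has_large_dense_squares d A \<longleftrightarrow>
     (\<forall>T. \<exists>t\<ge>T. t > 0 \<and> (\<exists>y. measure lebesgue (A \<inter> square y t) > d * t^2))"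

lemma upper_banach_density_pos_imp_large_dense_squares:
  assumes "upper_banach_density A > 0"
  obtains d where "d > 0" "has_large_dense_squares d A"
proof -
  let ?f = "\<lambda>t. SUP y. ereal (measure lebesgue (A \<inter> square y t) / measure lebesgue (square y t))"
  obtain d where d: "0 < d" "ereal d < upper_banach_density A"
    using ereal_dense2[OF assms] by (metis ereal_dense2 ereal_less(2) less_ereal.simps(4) less_ereal_le)
  have "\<exists>t\<ge>T. t > 0 \<and> (\<exists>y. measure lebesgue (A \<inter> square y t) > d * t^2)" for T
  proof -
    have "\<not> eventually (\<lambda>t. ?f t \<le> ereal d) at_top"
    proof
      assume "eventually (\<lambda>t. ?f t \<le> ereal d) at_top"
      then have "upper_banach_density A \<le> ereal d"
        unfolding upper_banach_density_def by (rule Limsup_bounded)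
      with d(2) show False
        by simp
    qed
    then obtain t where "t \<ge> T" "?f t > ereal d"
      by (auto simp: eventually_at_top_linorder not_le dest: spec[of _ T])
    then obtain y where y: "measure lebesgue (A \<inter> square y t) / measure lebesgue (square y t) > d"
      by (auto simp: less_SUP_iff)
    have "t > 0"
    proof (rule ccontr)
      assume "\<not> t > 0"
      then have "measure lebesgue (square y t) = 0"
        using measure_square[of 0 y] square_eq_empty[of t y] by (cases "t = 0") auto
      then show False
        using y d(1) by simp
    qed
    with y have "measure lebesgue (A \<inter> square y t) > d * t^2"
      using measure_square[of t y] by (simp add: field_simps)
    with \<open>t \<ge> T\<close> \<open>t > 0\<close> show ?thesis
      by blast
  qed
  with d(1) show thesis
    using that by (auto simp: has_large_dense_squares_def)
qed

lemma large_dense_squares_borel_subset: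
  assumes "A \<in> sets lebesgue" "has_large_dense_squares d A"
  obtains B where "B \<in> sets borel" "B \<subseteq> A" "has_large_dense_squares d B"
proof -
  obtain B N where B: "B \<in> sets borel" "negligible N" "B \<union> N = A"
    using sets_lebesgue_almost_borel[OF assms(1)] by blast
  have "measure lebesgue (B \<inter> square y t) = measure lebesgue (A \<inter> square y t)" for y t
  proof (rule measure_negligible_symdiff)
    show "A \<inter> square y t \<in> lmeasurable"
      using assms(1) by (rule lmeasurable_Int_square)
    show "negligible (sym_diff (A \<inter> square y t) (B \<inter> square y t))"
      by (rule negligible_subset[OF B(2)]) (use B in blast)
  qed
  with assms(2) have "has_large_dense_squares d B"
    by (simp add: has_large_dense_squares_def)
  with B show thesis
    using that by blast
qed

lemma emeasure_lebesgue_translate: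
  fixes S :: "'a::euclidean_space set"
  shows "emeasure lebesgue ((\<lambda>x. x - a) ` S) = emeasure lebesgue S"
  using emeasure_lebesgue_affine[of 1 "- a" S] by simp

lemma subset_avoiding_translate:
  fixes E :: "'a::real_normed_vector set"
  assumes "(\<Union>x\<in>K. ball x \<delta>) \<subseteq> U" "norm u < \<delta>" "C \<subseteq> E" "\<not> (\<exists>x\<in>C. x + u \<in> E)"
  shows "C \<subseteq> (E - K) \<union> (\<lambda>x. x - u) ` (U - E)"
proof
  fix x
  assume "x \<in> C"
  show "x \<in> (E - K) \<union> (\<lambda>x. x - u) ` (U - E)"
  proof (cases "x \<in> K")
    case True
    have "x + u \<in> (\<Union>x\<in>K. ball x \<delta>)"
      using assms(2) by (intro UN_I[OF True]) (simp add: dist_norm)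
    with assms(1,4) \<open>x \<in> C\<close> have "x + u \<in> U - E"
      by blast
    then have "(x + u) - u \<in> (\<lambda>x. x - u) ` (U - E)"
      by (rule imageI)
    then show ?thesis
      by simp
  next
    case False
    then show ?thesis
      using \<open>x \<in> C\<close> assms(3) by blast
  qed
qed

lemma large_subset_meets_translate:
  fixes E :: "'a::euclidean_space set"
  assumes E: "E \<in> sets lebesgue" "bounded E" and "\<epsilon> > 0"
  obtains \<delta> where "\<delta> > 0"
    "\<And>u C. norm u < \<delta> \<Longrightarrow> C \<subseteq> E \<Longrightarrow> emeasure lebesgue C > ennreal \<epsilon> \<Longrightarrow> \<exists>x\<in>C. x + u \<in> E"
proof -
  have "\<epsilon> / 2 > 0"
    using \<open>\<epsilon> > 0\<close> by simp
  obtain U where U: "open U" "E \<subseteq> U" "U - E \<in> lmeasurable" "emeasure lebesgue (U - E) < ennreal (\<epsilon> / 2)"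
    using sets_lebesgue_outer_open[OF E(1) \<open>\<epsilon> / 2 > 0\<close>] by blast
  obtain K where K: "closed K" "K \<subseteq> E" "E - K \<in> lmeasurable" "emeasure lebesgue (E - K) < ennreal (\<epsilon> / 2)"
    using sets_lebesgue_inner_closed[OF E(1) \<open>\<epsilon> / 2 > 0\<close>] by blast
  have "compact K"
    using K E(2) bounded_subset compact_eq_bounded_closed by blast
  then obtain \<delta> where \<delta>: "\<delta> > 0" "(\<Union>x\<in>K. ball x \<delta>) \<subseteq> U"
    using compact_subset_open_imp_ball_epsilon_subset U K by (metis order.trans)
  show thesis
  proof (rule that[OF \<delta>(1)])
    fix u :: 'a and C
    assume u: "norm u < \<delta>" and C: "C \<subseteq> E" "emeasure lebesgue C > ennreal \<epsilon>"
    show "\<exists>x\<in>C. x + u \<in> E"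
    proof (rule ccontr)
      assume no_hit: "\<not> (\<exists>x\<in>C. x + u \<in> E)"
      define T where "T = (\<lambda>x. x - u) ` (U - E)"
      have "C \<subseteq> (E - K) \<union> T"
        unfolding T_def using \<delta>(2) u C(1) no_hit by (rule subset_avoiding_translate)
      have "T \<in> lmeasurable"
        unfolding T_def using U(3) by (rule measurable_translation_subtract)
      then have "emeasure lebesgue C \<le> emeasure lebesgue (E - K) + emeasure lebesgue T"
        using \<open>C \<subseteq> (E - K) \<union> T\<close> K(3)
        by (metis emeasure_mono emeasure_subadditive fmeasurableD order.trans sets.Un)
      also have "\<dots> = emeasure lebesgue (E - K) + emeasure lebesgue (U - E)"
        unfolding T_def by (simp add: emeasure_lebesgue_translate)
      also have "\<dots> < ennreal (\<epsilon> / 2) + ennreal (\<epsilon> / 2)"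
        using U(4) K(4) by (simp add: add_strict_mono)
      also have "\<dots> = ennreal \<epsilon>"
        using \<open>\<epsilon> > 0\<close> by (simp flip: ennreal_plus)
      finally show False
        using C(2) by simp
    qed
  qed
qed

lemma nn_integral_overlap_swap:
  fixes E B Q :: "'a::euclidean_space set"
  assumes [measurable]: "E \<in> sets borel" "B \<in> sets borel" "Q \<in> sets borel"
  shows "(\<integral>\<^sup>+ v. indicator Q v * emeasure lborel {x\<in>E. x + v \<in> B} \<partial>lborel)
       = (\<integral>\<^sup>+ x. indicator E x * emeasure lborel {v\<in>Q. x + v \<in> B} \<partial>lborel)"
proof -
  let ?f = "\<lambda>x v. indicator E x * indicator B (x + v) * indicator Q v :: ennreal"
  have "(\<lambda>(x, v). ?f x v) \<in> borel_measurable (lborel \<Otimes>\<^sub>M lborel)"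
    by measurable
  then have "(\<integral>\<^sup>+ v. (\<integral>\<^sup>+ x. ?f x v \<partial>lborel) \<partial>lborel) = (\<integral>\<^sup>+ x. (\<integral>\<^sup>+ v. ?f x v \<partial>lborel) \<partial>lborel)"
    by (rule lborel_pair.Fubini')
  moreover have "(\<integral>\<^sup>+ x. ?f x v \<partial>lborel) = indicator Q v * emeasure lborel {x\<in>E. x + v \<in> B}" for v
  proof -
    have "(\<integral>\<^sup>+ x. ?f x v \<partial>lborel) = (\<integral>\<^sup>+ x. indicator Q v * indicator {x\<in>E. x + v \<in> B} x \<partial>lborel)"
      by (intro nn_integral_cong) (auto simp: indicator_def)
    then show ?thesis
      by (simp add: nn_integral_cmult_indicator)
  qed
  moreover have "(\<integral>\<^sup>+ v. ?f x v \<partial>lborel) = indicator E x * emeasure lborel {v\<in>Q. x + v \<in> B}" for x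
  proof -
    have "(\<integral>\<^sup>+ v. ?f x v \<partial>lborel) = (\<integral>\<^sup>+ v. indicator E x * indicator {v\<in>Q. x + v \<in> B} v \<partial>lborel)"
      by (intro nn_integral_cong) (auto simp: indicator_def)
    then show ?thesis
      by (simp add: nn_integral_cmult_indicator)
  qed
  ultimately show ?thesis
    by simp
qed

lemma overlap_integral_lower_bound:
  fixes E B :: "(real^2) set"
  assumes [measurable]: "E \<in> sets borel" "B \<in> sets borel" and E: "E \<subseteq> square y0 t0"
  shows "emeasure lborel E * emeasure lborel (B \<inter> square y t)
      \<le> (\<integral>\<^sup>+ v. indicator (square (y - y0) (t + t0)) v * emeasure lborel {x\<in>E. x + v \<in> B} \<partial>lborel)"
proof -
  let ?Q = "square (y - y0) (t + t0)"
  have "emeasure lborel (B \<inter> square y t) \<le> emeasure lborel {v\<in>?Q. x + v \<in> B}" if "x \<in> E" for x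
  proof -
    have "(\<lambda>z. z - x) ` (B \<inter> square y t) \<subseteq> {v\<in>?Q. x + v \<in> B}"
      using diff_mem_square[of x y0 t0] that E by auto
    then have "emeasure lebesgue ((\<lambda>z. z - x) ` (B \<inter> square y t)) \<le> emeasure lebesgue {v\<in>?Q. x + v \<in> B}"
      by (rule emeasure_mono) simp
    then show ?thesis
      by (simp add: emeasure_lebesgue_translate)
  qed
  then have "(\<integral>\<^sup>+ x. emeasure lborel (B \<inter> square y t) * indicator E x \<partial>lborel)
      \<le> (\<integral>\<^sup>+ x. indicator E x * emeasure lborel {v\<in>?Q. x + v \<in> B} \<partial>lborel)"
    by (intro nn_integral_mono) (auto simp: indicator_def)
  also have "\<dots> = (\<integral>\<^sup>+ v. indicator ?Q v * emeasure lborel {x\<in>E. x + v \<in> B} \<partial>lborel)"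
    by (rule nn_integral_overlap_swap[symmetric]) simp_all
  finally show ?thesis
    by (subst (asm) nn_integral_cmult_indicator) (simp_all add: mult.commute)
qed

lemma overlap_integral_upper_bound:
  fixes E B Q :: "(real^2) set"
  assumes [measurable]: "E \<in> sets borel" "B \<in> sets borel" "Q \<in> sets borel" and "R \<ge> 0"
    and far: "\<And>v. norm v \<ge> R \<Longrightarrow> emeasure lborel {x\<in>E. x + v \<in> B} \<le> c"
  shows "(\<integral>\<^sup>+ v. indicator Q v * emeasure lborel {x\<in>E. x + v \<in> B} \<partial>lborel)
      \<le> c * emeasure lborel Q + emeasure lborel E * ennreal ((2 * R)^2)"
proof -
  let ?S = "square 0 (2 * R)"
  have "indicator Q v * emeasure lborel {x\<in>E. x + v \<in> B} \<le> c * indicator Q v + emeasure lborel E * indicator ?S v" for v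
  proof (cases "norm v \<ge> R")
    case True
    then show ?thesis
      using far[OF True] by (auto simp: indicator_def add_increasing2)
  next
    case False
    then have "v \<in> ?S"
      by (simp add: norm_less_imp_mem_square)
    moreover have "emeasure lborel {x\<in>E. x + v \<in> B} \<le> emeasure lborel E"
      by (rule emeasure_mono) auto
    ultimately show ?thesis
      by (auto simp: indicator_def add_increasing)
  qed
  then have "(\<integral>\<^sup>+ v. indicator Q v * emeasure lborel {x\<in>E. x + v \<in> B} \<partial>lborel)
      \<le> (\<integral>\<^sup>+ v. c * indicator Q v + emeasure lborel E * indicator ?S v \<partial>lborel)"
    by (rule nn_integral_mono)
  also have "\<dots> = c * emeasure lborel Q + emeasure lborel E * emeasure lborel ?S"
    by (simp add: nn_integral_add nn_integral_cmult_indicator)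
  finally show ?thesis
    using emeasure_square[of "2 * R" 0] \<open>R \<ge> 0\<close> by simp
qed

lemma exists_far_shift_large_overlap:
  fixes E B :: "(real^2) set"
  assumes [measurable]: "E \<in> sets borel" "B \<in> sets borel"
    and E: "E \<subseteq> square y0 t0" "t0 \<ge> 0" "emeasure lborel E = ennreal \<mu>" "\<mu> > 0"
    and B: "has_large_dense_squares d B" "d > 0"
    and "R \<ge> 0"
  shows "\<exists>v. norm v \<ge> R \<and> emeasure lborel {x\<in>E. x + v \<in> B} > ennreal (\<mu> * d / 8)"
proof (rule ccontr)
  assume "\<not> ?thesis"
  then have far: "emeasure lborel {x\<in>E. x + v \<in> B} \<le> ennreal (\<mu> * d / 8)" if "norm v \<ge> R" for v
    using that by (auto simp: not_less)
  obtain t y where t: "t \<ge> max t0 (8 * R^2 / d + 1)"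
    and y: "measure lebesgue (B \<inter> square y t) > d * t^2"
    using B(1) unfolding has_large_dense_squares_def by blast
  define m where "m = measure lebesgue (B \<inter> square y t)"
  \<comment> \<open>The overlap integral over v \<in> Q(y - y0, t + t0) is at least \<mu> m > \<mu> d t^2, but the
     bound on far shifts makes it at most \<mu> d t^2 / 2 + 4 \<mu> R^2.\<close>
  have "ennreal \<mu> * ennreal m \<le> ennreal (\<mu> * d / 8) * ennreal ((t + t0)^2) + ennreal \<mu> * ennreal ((2 * R)^2)"
    using overlap_integral_lower_bound[of E B y0 t0 y t]
      overlap_integral_upper_bound[of E B "square (y - y0) (t + t0)" R, OF _ _ _ \<open>R \<ge> 0\<close> far]
      emeasure_square[of "t + t0" "y - y0"] emeasure_Int_square[of B y t] t E
    by (simp add: m_def)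
  then have "\<mu> * m \<le> \<mu> * (d / 8 * (t + t0)^2 + (2 * R)^2)"
    using \<open>\<mu> > 0\<close> \<open>d > 0\<close>
    by (simp add: ennreal_mult'[symmetric] ennreal_plus[symmetric] algebra_simps del: ennreal_plus)
  then have "m \<le> d / 8 * (t + t0)^2 + 4 * R^2"
    using \<open>\<mu> > 0\<close> by (simp add: power_mult_distrib)
  also have "\<dots> \<le> d / 8 * (2 * t)^2 + 4 * R^2"
    using t \<open>t0 \<ge> 0\<close> \<open>d > 0\<close> by (intro add_right_mono mult_left_mono power_mono) auto
  finally have "d * t^2 < 8 * R^2"
    using y by (simp add: m_def power_mult_distrib)
  moreover have "8 * R^2 < d * t"
    using t \<open>d > 0\<close> by (simp add: field_simps)
  moreover have "d * t \<le> d * t^2"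
  proof -
    have "8 * R^2 / d \<ge> 0"
      using \<open>d > 0\<close> by simp
    then have "1 \<le> t"
      using t by linarith
    then show ?thesis
      using \<open>d > 0\<close> by (simp add: power2_eq_square)
  qed
  ultimately show False
    by linarith
qed

lemma large_dense_squares_near_far_shifts:
  fixes B :: "(real^2) set"
  assumes [measurable]: "B \<in> sets borel" and B: "has_large_dense_squares d B" "d > 0"
  obtains \<delta> where "\<delta> > 0"
    "\<And>R. \<exists>v. norm v \<ge> R \<and> (\<forall>u. norm u < \<delta> \<longrightarrow> (\<exists>x\<in>B. x + u \<in> B \<and> x + v \<in> B))"
proof -
  obtain t0 y0 where "t0 > 0" and dense0: "measure lebesgue (B \<inter> square y0 t0) > d * t0^2"
    using B(1) unfolding has_large_dense_squares_def by blast
  define E where "E = B \<inter> square y0 t0"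
  define \<mu> where "\<mu> = measure lebesgue E"
  have [measurable]: "E \<in> sets borel"
    by (simp add: E_def)
  have "d * t0^2 > 0"
    using \<open>t0 > 0\<close> \<open>d > 0\<close> by simp
  with dense0 have "\<mu> > 0"
    unfolding \<mu>_def E_def by linarith
  have "emeasure lborel E = ennreal \<mu>"
    using emeasure_Int_square[of B y0 t0] by (simp add: E_def \<mu>_def)
  have "E \<in> sets lebesgue" "bounded E" "\<mu> * d / 16 > 0"
    using \<open>\<mu> > 0\<close> \<open>d > 0\<close> by (auto simp: E_def bounded_Int)
  then obtain \<delta> where "\<delta> > 0" and meets:
    "\<And>u C. norm u < \<delta> \<Longrightarrow> C \<subseteq> E \<Longrightarrow> emeasure lebesgue C > ennreal (\<mu> * d / 16) \<Longrightarrow> \<exists>x\<in>C. x + u \<in> E"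
    using large_subset_meets_translate by metis
  show thesis
  proof (rule that[OF \<open>\<delta> > 0\<close>])
    fix R
    obtain v where v: "norm v \<ge> max R 0"
      and overlap: "emeasure lborel {x\<in>E. x + v \<in> B} > ennreal (\<mu> * d / 8)"
      using exists_far_shift_large_overlap[of E B y0 t0 \<mu> d "max R 0"]
        \<open>emeasure lborel E = ennreal \<mu>\<close> \<open>\<mu> > 0\<close> \<open>t0 > 0\<close> B
      by (auto simp: E_def)
    have "ennreal (\<mu> * d / 16) \<le> ennreal (\<mu> * d / 8)"
      using \<open>\<mu> > 0\<close> \<open>d > 0\<close> by (intro ennreal_leI) simp
    with overlap have "emeasure lebesgue {x\<in>E. x + v \<in> B} > ennreal (\<mu> * d / 16)"
      by simp
    then have "\<forall>u. norm u < \<delta> \<longrightarrow> (\<exists>x\<in>B. x + u \<in> B \<and> x + v \<in> B)"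
      using meets[of _ "{x\<in>E. x + v \<in> B}"] by (auto simp: E_def)
    with v show "\<exists>v. norm v \<ge> R \<and> (\<forall>u. norm u < \<delta> \<longrightarrow> (\<exists>x\<in>B. x + u \<in> B \<and> x + v \<in> B))"
      by auto
  qed
qed

lemma exists_shift_triangle_area:
  fixes v :: "real^2"
  assumes "v \<noteq> 0" "\<alpha> \<ge> 0"
  obtains u where "norm u = 2 * \<alpha> / norm v" "\<And>x. triangle_area x (x + u) (x + v) = \<alpha>"
proof -
  define k where "k = 2 * \<alpha> / (norm v)^2"
  \<comment> \<open>u is v rotated by a right angle and scaled so that the parallelogram on u, v has area 2\<alpha>.\<close>
  define u :: "real^2" where "u = vector [- (k * v $ 2), k * v $ 1]"
  have norm_sq: "(norm w)^2 = w $ 1 * w $ 1 + w $ 2 * w $ 2" for w :: "real^2"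
    by (simp add: power2_norm_eq_inner inner_vec_def sum_2)
  have "norm v > 0"
    using assms(1) by simp
  have "(norm u)^2 = (k * norm v)^2"
    unfolding norm_sq power_mult_distrib u_def by (simp add: algebra_simps power2_eq_square)
  then have "norm u = k * norm v"
    using \<open>norm v > 0\<close> assms(2) by (simp add: k_def power2_eq_iff_nonneg)
  also have "\<dots> = 2 * \<alpha> / norm v"
    by (simp add: k_def power2_eq_square)
  finally have "norm u = 2 * \<alpha> / norm v" .
  moreover have "triangle_area x (x + u) (x + v) = \<alpha>" for x
  proof -
    have "u $ 1 * v $ 2 - u $ 2 * v $ 1 = - k * (norm v)^2"
      unfolding u_def norm_sq[of v] by (simp add: algebra_simps)
    also have "\<dots> = - 2 * \<alpha>"
      using \<open>norm v > 0\<close> by (simp add: k_def)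
    finally show ?thesis
      using assms(2) by (simp add: triangle_area_def)
  qed
  ultimately show thesis
    using that by blast
qed

theorem corollary1p8:
  fixes A :: "(real^2) set" and \<alpha> :: real
  assumes "A \<in> sets lebesgue"
    and "upper_banach_density A > 0"
    and "\<alpha> > 0"
  shows "\<exists>x\<in>A. \<exists>y\<in>A. \<exists>z\<in>A. triangle_area x y z = \<alpha>"
proof -
  obtain d where "d > 0" "has_large_dense_squares d A"
    using upper_banach_density_pos_imp_large_dense_squares[OF assms(2)] .
  then obtain B where "B \<in> sets borel" "B \<subseteq> A" "has_large_dense_squares d B"
    using large_dense_squares_borel_subset[OF assms(1)] by blast
  with \<open>d > 0\<close> obtain \<delta> where "\<delta> > 0"
    "\<And>R. \<exists>v. norm v \<ge> R \<and> (\<forall>u. norm u < \<delta> \<longrightarrow> (\<exists>x\<in>B. x + u \<in> B \<and> x + v \<in> B))"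
    using large_dense_squares_near_far_shifts by metis
  then obtain v where v: "norm v \<ge> 2 * \<alpha> / \<delta> + 1"
    and near: "\<And>u. norm u < \<delta> \<Longrightarrow> \<exists>x\<in>B. x + u \<in> B \<and> x + v \<in> B"
    by blast
  have "2 * \<alpha> / \<delta> > 0"
    using \<open>\<delta> > 0\<close> assms(3) by simp
  with v have "norm v > 2 * \<alpha> / \<delta>" "v \<noteq> 0"
    by auto
  moreover have "\<alpha> \<ge> 0"
    using assms(3) by simp
  ultimately obtain u where u: "norm u = 2 * \<alpha> / norm v" and area: "\<And>x. triangle_area x (x + u) (x + v) = \<alpha>"
    using exists_shift_triangle_area by metis
  have "2 * \<alpha> < \<delta> * norm v"
    using \<open>norm v > 2 * \<alpha> / \<delta>\<close> \<open>\<delta> > 0\<close> by (simp add: pos_divide_less_eq mult.commute)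
  then have "norm u < \<delta>"
    using u \<open>v \<noteq> 0\<close> by (simp add: pos_divide_less_eq)
  then obtain x where "x \<in> B" "x + u \<in> B" "x + v \<in> B"
    using near by blast
  then show ?thesis
    using area \<open>B \<subseteq> A\<close> by blast
qed

end
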